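(* Let $0<\mu<L_{\max}^{-1}$ with $L_{\max}=\max_i\|A_i\|_2^2$, let $\{x^n\}$ be generated by GAITA (as in the context) from an arbitrary $x^0\in\mathbf{R}^N$, and let $x^*$ be any limit point of $\{x^n\}$. Then there exists a positive integer $n^*>N$ such that for all $n>n^*$: (a) for every $j=1,\dots,N$, either $x_j^n=0$ or $|x_j^n|\geq\eta_{\mu,q}$; (b) $Supp(x^n)=Supp(x^* )$; (c) $sgn(x^n)=sgn(x^* )$ (componentwise).
   Context: Let $A\in\mathbf{R}^{m\times N}$ have columns $A_1,\dots,A_N$, $y\in\mathbf{R}^m$, $\lambda>0$, $q\in(0,1)$, and $T_\lambda(x)=\frac12\|Ax-y\|_2^2+\lambda\sum_{i=1}^N|x_i|^q$. For a step size $\mu>0$ set $\tau_{\mu,q}=\frac{2-q}{2-2q}(2\lambda\mu(1-q))^{\frac{1}{2-q}}$ and $\eta_{\mu,q}=(2\lambda\mu(1-q))^{\frac{1}{2-q}}$. For $z\in\mathbf{R}$ let $prox_{\mu,\lambda|\cdot|^q}(z)=\arg\min_{v\in\mathbf{R}}\{\frac{(z-v)^2}{2\mu}+\lambda|v|^q\}$ (a single point when $|z|\neq\tau_{\mu,q}$). Define $\mathcal{T}(z,w)$ as the unique element of $prox_{\mu,\lambda|\cdot|^q}(z)$ if $|z|\neq\tau_{\mu,q}$, and, if $|z|=\tau_{\mu,q}$, as $sgn(z)\eta_{\mu,q}$ when $w\neq0$ and $0$ when $w=0$. GAITA: given $x^0\in\mathbf{R}^N$, for $n=0,1,2,\dots$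 let $i=(n\bmod N)+1$, $z_i^n=x_i^n-\mu A_i^T(Ax^n-y)$, $x_i^{n+1}=\mathcal{T}(z_i^n,x_i^n)$, $x_j^{n+1}=x_j^n$ for $j\neq i$. $Supp(x)=\{i:x_i\neq0\}$, $sgn(0)=0$. *)

theory Defs
  imports "HOL-Analysis.Analysis"
begin

(* Conventions: A is an m x N real matrix given as A k j (row k < m, column j < N);
   vectors in R^N are functions nat => real, only coordinates j < N matter.
   Coordinates are 0-indexed: the paper's coordinate i corresponds to i-1 here. *)

definition tau_mq :: "real \<Rightarrow> real \<Rightarrow> real \<Rightarrow> real" where
  "tau_mq lam mu q = (2 - q) / (2 - 2*q) * (2*lam*mu*(1-q)) powr (1/(2-q))"

definition eta_mq :: "real \<Rightarrow> real \<Rightarrow> real \<Rightarrow> real" where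
  "eta_mq lam mu q = (2*lam*mu*(1-q)) powr (1/(2-q))"

definition prox_q :: "real \<Rightarrow> real \<Rightarrow> real \<Rightarrow> real \<Rightarrow> real set" where
  "prox_q lam mu q z = {v. \<forall>u. (z - v)^2 / (2*mu) + lam * \<bar>v\<bar> powr q
                              \<le> (z - u)^2 / (2*mu) + lam * \<bar>u\<bar> powr q}"

definition Tq :: "real \<Rightarrow> real \<Rightarrow> real \<Rightarrow> real \<Rightarrow> real \<Rightarrow> real" where
  "Tq lam mu q z w =
     (if \<bar>z\<bar> \<noteq> tau_mq lam mu q then (THE v. v \<in> prox_q lam mu q z)
      else if w \<noteq> 0 then sgn z * eta_mq lam mu q else 0)"

definition col_norm2 :: "nat \<Rightarrow> (nat \<Rightarrow> nat \<Rightarrow> real) \<Rightarrow> nat \<Rightarrow> real" where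
  "col_norm2 m A j = (\<Sum>k<m. (A k j)^2)"

definition Lmax :: "nat \<Rightarrow> nat \<Rightarrow> (nat \<Rightarrow> nat \<Rightarrow> real) \<Rightarrow> real" where
  "Lmax m N A = Max ((\<lambda>j. col_norm2 m A j) ` {..<N})"

definition is_gaita :: "nat \<Rightarrow> nat \<Rightarrow> (nat \<Rightarrow> nat \<Rightarrow> real) \<Rightarrow> (nat \<Rightarrow> real)
    \<Rightarrow> real \<Rightarrow> real \<Rightarrow> real \<Rightarrow> (nat \<Rightarrow> nat \<Rightarrow> real) \<Rightarrow> bool" where
  "is_gaita m N A y lam q mu x \<longleftrightarrow>
     (\<forall>n. \<forall>j<N. x (Suc n) j =
        (if j = n mod N then
           Tq lam mu q
              (x n j - mu * (\<Sum>k<m. A k j * ((\<Sum>l<N. A k l * x n l) - y k)))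
              (x n j)
         else x n j))"

definition is_limit_point :: "nat \<Rightarrow> (nat \<Rightarrow> nat \<Rightarrow> real) \<Rightarrow> (nat \<Rightarrow> real) \<Rightarrow> bool" where
  "is_limit_point N x xs \<longleftrightarrow>
     (\<exists>r. strict_mono r \<and> (\<forall>j<N. (\<lambda>k. x (r k) j) \<longlonglongrightarrow> xs j))"

definition supp :: "nat \<Rightarrow> (nat \<Rightarrow> real) \<Rightarrow> nat set" where
  "supp N v = {j. j < N \<and> v j \<noteq> 0}"

end

theory Submission
  imports Defs
begin

text \<open>
  The prox of \<open>\<lambda>|v|\<^sup>q\<close> jumps: for \<open>|z| < \<tau>\<close> it is \<open>{0}\<close>, for \<open>|z| > \<tau>\<close> it is a single
  point of modulus at least \<open>\<eta>\<close>, and at \<open>|z| = \<tau>\<close> both \<open>0\<close> and \<open>sgn z \<eta>\<close> are minimisers.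
  Hence every coordinate updated by GAITA lies in \<open>{0} \<union> {|t| \<ge> \<eta>}\<close>, and after \<open>N\<close> steps
  all coordinates have been updated.  Since \<open>\<mu> < 1/L\<^sub>m\<^sub>a\<^sub>x\<close>, each step decreases \<open>T\<^sub>\<lambda>\<close> by
  \<open>(1/\<mu> - L\<^sub>m\<^sub>a\<^sub>x)/2\<close> times the squared step length, so the steps are square summable and
  eventually shorter than \<open>\<eta>\<close>.  A step shorter than \<open>\<eta>\<close> between two values of
  \<open>{0} \<union> {|t| \<ge> \<eta>}\<close> cannot change the sign, so the signs freeze, and a limit point inherits
  them because nonzero coordinates stay at distance \<open>\<eta>\<close> from \<open>0\<close>.
\<close>

lemma powr_eq_powr_minus_one_mult:
  fixes x a :: real
  assumes "x > 0"
  shows "x powr a = x powr (a - 1) * x"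
  using powr_add[of x "a - 1" 1] assms by simp

lemma powr_above_tangent:
  fixes r x y :: real
  assumes "r \<le> 0" "x > 0" "y > 0"
  shows "y powr r - x powr r \<ge> r * x powr (r - 1) * (y - x)"
proof -
  have "convex_on {0<..} (\<lambda>t::real. t powr r)"
  proof (rule f''_ge0_imp_convex[where f'="\<lambda>t. r * t powr (r - 1)"
                                   and f''="\<lambda>t. r * ((r - 1) * t powr (r - 1 - 1))"])
    show "r * ((r - 1) * t powr (r - 1 - 1)) \<ge> 0" if "t \<in> {0<..}" for t
      using assms(1) by (intro mult_nonpos_nonpos) (auto simp: mult_nonpos_nonneg)
  qed (auto intro!: derivative_eq_intros)
  then show ?thesis
    using assms
    by (intro convex_on_imp_above_tangent[where f'="r * x powr (r - 1)"])
       (auto intro!: derivative_eq_intros simp: interior_open)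
qed

lemma sgn_eq_if_gap:
  fixes a b e :: real
  assumes "e > 0" "a = 0 \<or> \<bar>a\<bar> \<ge> e" "b = 0 \<or> \<bar>b\<bar> \<ge> e" "\<bar>b - a\<bar> < e"
  shows "sgn b = sgn a"
  using assms by (auto simp: sgn_if)

lemma sgn_limit_eq_if_gap:
  fixes u :: "nat \<Rightarrow> real"
  assumes lim: "u \<longlonglongrightarrow> l" and e: "e > 0"
    and gap: "\<And>k. k \<ge> K \<Longrightarrow> u k = 0 \<or> \<bar>u k\<bar> \<ge> e"
    and const: "\<And>k. k \<ge> K \<Longrightarrow> sgn (u k) = s"
  shows "sgn l = s"
proof -
  consider "s = 0" | "s = 1" | "s = -1"
    using const[of K] by (auto simp: sgn_if split: if_splits)
  then show ?thesis
  proof cases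
    case 1
    then have "\<forall>k\<ge>K. u k = 0"
      using const by (simp add: sgn_0_0)
    then have "eventually (\<lambda>k. u k = 0) sequentially"
      by (auto simp: eventually_sequentially)
    then have "u \<longlonglongrightarrow> 0" by (rule tendsto_eventually)
    then show ?thesis using 1 lim LIMSEQ_unique by fastforce
  next
    case 2
    then have "\<forall>k\<ge>K. e \<le> u k"
      using gap const by (fastforce simp: sgn_1_pos)
    then have "e \<le> l" using lim by (intro LIMSEQ_le_const) auto
    then show ?thesis using 2 e by simp
  next
    case 3
    then have "\<forall>k\<ge>K. u k \<le> -e"
      using gap const by (fastforce simp: sgn_1_neg)
    then have "l \<le> -e" using lim by (intro LIMSEQ_le_const2) auto
    then show ?thesis using 3 e by simp
  qed
qed

lemma summable_of_sufficient_decrease: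
  fixes T d :: "nat \<Rightarrow> real"
  assumes "c > 0" "\<And>n. T n \<ge> 0" "\<And>n. d n \<ge> 0" "\<And>n. T (Suc n) + c * d n \<le> T n"
  shows "summable d"
proof (rule summableI_nonneg_bounded)
  fix M
  have "T M + c * (\<Sum>n<M. d n) \<le> T 0"
  proof (induction M)
    case (Suc M)
    then show ?case using assms(4)[of M] by (simp add: distrib_left)
  qed simp
  then show "(\<Sum>n<M. d n) \<le> T 0 / c"
    using assms(1) assms(2)[of M] by (simp add: field_simps)
qed (use assms(3) in simp)

locale prox_setting =
  fixes lam mu q :: real
  assumes lam_pos: "lam > 0" and mu_pos: "mu > 0" and q_pos: "0 < q" and q_less_1: "q < 1"
begin

definition prox_obj :: "real \<Rightarrow> real \<Rightarrow> real" where
  "prox_obj z v = (z - v)^2 / (2*mu) + lam * \<bar>v\<bar> powr q"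

definition a :: real where
  "a = 2*lam*mu*(1-q)"

abbreviation "eta \<equiv> eta_mq lam mu q"
abbreviation "tau \<equiv> tau_mq lam mu q"

lemma prox_q_iff: "v \<in> prox_q lam mu q z \<longleftrightarrow> (\<forall>u. prox_obj z v \<le> prox_obj z u)"
  by (simp add: prox_q_def prox_obj_def)

lemma a_pos: "a > 0"
  using lam_pos mu_pos q_less_1 by (simp add: a_def)

lemma eta_eq: "eta = a powr (1/(2-q))"
  by (simp add: eta_mq_def a_def)

lemma eta_pos: "eta > 0"
  using a_pos by (simp add: eta_eq)

lemma tau_eq: "tau = (2-q)/(2-2*q) * eta"
  by (simp add: tau_mq_def eta_mq_def)

lemma tau_pos: "tau > 0"
  using eta_pos q_less_1 by (simp add: tau_eq)

lemma eta_powr_q_minus_2: "eta powr (q-2) = 1/a"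
proof -
  have "eta powr (2-q) = a"
    using a_pos q_less_1 by (simp add: eta_eq powr_powr)
  moreover have "eta powr (q-2) = inverse (eta powr (2-q))"
    by (simp add: powr_minus[symmetric])
  ultimately show ?thesis by (simp add: divide_inverse)
qed

lemma eta_powr_q_minus_1: "eta powr (q-1) = eta/a"
  using powr_eq_powr_minus_one_mult[OF eta_pos, of "q-1"] by (simp add: eta_powr_q_minus_2)

lemma eta_powr_q: "eta powr q = eta^2/a"
  using powr_add[of eta "q-2" 2] eta_pos by (simp add: eta_powr_q_minus_2)

text \<open>
  The penalty lies above the line through the origin of slope \<open>\<tau>/\<mu>\<close>, touching it at \<open>\<eta>\<close>:
  this is the tangent inequality for the convex function \<open>v\<^bsup>q-1\<^esup>\<close> at \<open>\<eta>\<close>, multiplied by \<open>v\<close>.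
\<close>
lemma penalty_ge_tau_line:
  assumes v: "v > 0"
  shows "v^2/(2*mu) + lam * v powr q \<ge> v * tau / mu"
proof -
  have "v powr (q-1) - eta powr (q-1) \<ge> (q-1) * eta powr (q-1-1) * (v - eta)"
    using powr_above_tangent[of "q-1" eta v] q_less_1 eta_pos v by simp
  moreover have "q - 1 - 1 = q - 2" by simp
  ultimately have "v powr (q-1) \<ge> eta/a + (q-1) * (1/a) * (v - eta)"
    by (simp add: eta_powr_q_minus_1 eta_powr_q_minus_2)
  then have "lam * v powr q \<ge> lam * v * (eta/a + (q-1) * (1/a) * (v - eta))"
    using v lam_pos powr_eq_powr_minus_one_mult[OF v, of q]
    by (simp add: mult.commute mult.left_commute)
  also have "lam * v * (eta/a + (q-1) * (1/a) * (v - eta))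
             = (lam/a) * (v * eta - (1-q) * v * (v - eta))"
    using a_pos by (simp add: field_simps)
  also have "lam/a = 1/(2*mu*(1-q))"
    using lam_pos mu_pos q_less_1 by (simp add: a_def field_simps)
  also have "1/(2*mu*(1-q)) * (v * eta - (1-q) * v * (v - eta))
             = v * eta / (2*mu*(1-q)) - v * (v - eta) / (2*mu)"
    using mu_pos q_less_1 by (simp add: field_simps)
  finally have "lam * v powr q \<ge> v * eta / (2*mu*(1-q)) - v * (v - eta) / (2*mu)" .
  moreover have "v * tau / mu = v * eta / (2*mu*(1-q)) + v * eta / (2*mu)"
    using mu_pos q_less_1 by (simp add: tau_eq field_simps)
  moreover have "v^2/(2*mu) - v * (v - eta) / (2*mu) = v * eta / (2*mu)"
    using mu_pos by (simp add: field_simps power2_eq_square)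
  ultimately show ?thesis by linarith
qed

lemma penalty_eq_tau_line_at_eta: "eta^2/(2*mu) + lam * eta powr q = eta * tau / mu"
  using mu_pos q_less_1 lam_pos by (simp add: eta_powr_q tau_eq a_def field_simps power2_eq_square)

lemma prox_obj_minus_at_zero_ge: "prox_obj z v - prox_obj z 0 \<ge> \<bar>v\<bar> * (tau - \<bar>z\<bar>) / mu"
proof (cases "v = 0")
  case False
  have "z * v \<le> \<bar>z\<bar> * \<bar>v\<bar>" by (metis abs_ge_self abs_mult)
  then have "z * v / mu \<le> \<bar>z\<bar> * \<bar>v\<bar> / mu" using mu_pos by (simp add: divide_right_mono)
  moreover have "prox_obj z v - prox_obj z 0 = \<bar>v\<bar>^2/(2*mu) + lam * \<bar>v\<bar> powr q - z * v/mu"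
    using mu_pos by (simp add: prox_obj_def field_simps power2_eq_square)
  moreover have "\<bar>v\<bar> * (tau - \<bar>z\<bar>) / mu = \<bar>v\<bar> * tau / mu - \<bar>z\<bar> * \<bar>v\<bar> / mu"
    by (simp add: right_diff_distrib diff_divide_distrib mult.commute)
  moreover have "\<bar>v\<bar>^2/(2*mu) + lam * \<bar>v\<bar> powr q \<ge> \<bar>v\<bar> * tau / mu"
    using penalty_ge_tau_line[of "\<bar>v\<bar>"] False by simp
  ultimately show ?thesis by linarith
qed (simp add: prox_obj_def)

lemma prox_q_uminus: "v \<in> prox_q lam mu q z \<longleftrightarrow> -v \<in> prox_q lam mu q (-z)"
proof -
  have "prox_obj (-z) (-v) = prox_obj z v" for z v
    by (simp add: prox_obj_def power2_commute)
  then show ?thesis by (metis prox_q_iff minus_minus)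
qed

lemma prox_q_nonempty: "\<exists>v. v \<in> prox_q lam mu q z"
proof -
  define I where "I = {-\<bar>z\<bar>..\<bar>z\<bar>}"
  have "continuous_on I (prox_obj z)"
    unfolding prox_obj_def
    by (intro continuous_intros continuous_on_powr') (use q_pos mu_pos in auto)
  then obtain v where v: "\<forall>u\<in>I. prox_obj z v \<le> prox_obj z u"
    using continuous_attains_inf[of I "prox_obj z"] by (auto simp: I_def)
  have "prox_obj z v \<le> prox_obj z u" for u
  proof -
    define c where "c = max (-\<bar>z\<bar>) (min \<bar>z\<bar> u)"
    have "\<bar>c\<bar> powr q \<le> \<bar>u\<bar> powr q" using q_pos by (intro powr_mono2) (auto simp: c_def)
    moreover have "\<bar>z - c\<bar> \<le> \<bar>z - u\<bar>" by (auto simp: c_def)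
    then have "(z - c)^2 \<le> (z - u)^2" by (metis abs_ge_zero power2_abs power_mono)
    ultimately have "prox_obj z c \<le> prox_obj z u"
      unfolding prox_obj_def using mu_pos lam_pos
      by (intro add_mono divide_right_mono mult_left_mono) auto
    moreover have "c \<in> I" by (auto simp: c_def I_def)
    ultimately show ?thesis using v by fastforce
  qed
  then show ?thesis by (auto simp: prox_q_iff)
qed

lemma prox_q_below_tau:
  assumes "\<bar>z\<bar> < tau"
  shows "prox_q lam mu q z = {0}"
proof -
  have pos: "prox_obj z v > prox_obj z 0" if "v \<noteq> 0" for v
  proof -
    have "\<bar>v\<bar> * (tau - \<bar>z\<bar>) / mu > 0" using that assms mu_pos by simp
    with prox_obj_minus_at_zero_ge[where z=z and v=v] show ?thesis by linarith
  qed
  then have "0 \<in> prox_q lam mu q z"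
    unfolding prox_q_iff by (metis less_eq_real_def)
  moreover have "v = 0" if "v \<in> prox_q lam mu q z" for v
    using that pos[of v] unfolding prox_q_iff by (meson not_less)
  ultimately show ?thesis by blast
qed

lemma prox_q_at_tau:
  assumes z: "\<bar>z\<bar> = tau"
  shows "0 \<in> prox_q lam mu q z" "sgn z * eta \<in> prox_q lam mu q z"
proof -
  have z0: "prox_obj z 0 \<le> prox_obj z u" for u
    using prox_obj_minus_at_zero_ge[where z=z and v=u] z by simp
  then show "0 \<in> prox_q lam mu q z" by (simp add: prox_q_iff)
  have "z \<noteq> 0" using z tau_pos by auto
  then have "z * sgn z = tau" using z by (simp add: abs_sgn mult.commute)
  moreover have "prox_obj z (sgn z * eta) - prox_obj z 0
                 = eta^2/(2*mu) - (z * sgn z) * eta / mu + lam * eta powr q"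
    using mu_pos \<open>z \<noteq> 0\<close> eta_pos by (simp add: prox_obj_def field_simps power2_eq_square sgn_if)
  ultimately have "prox_obj z (sgn z * eta) = prox_obj z 0"
    using penalty_eq_tau_line_at_eta by (simp add: mult.commute)
  then show "sgn z * eta \<in> prox_q lam mu q z" using z0 by (simp add: prox_q_iff)
qed

lemma prox_q_stationary:
  assumes v: "v > 0" and p: "v \<in> prox_q lam mu q z"
  shows "z = v + lam * mu * q * v powr (q-1)"
proof -
  define g where "g u = (z-u)^2/(2*mu) + lam * u powr q" for u
  have "DERIV g v :> (v - z)/mu + lam * (q * v powr (q-1))"
    unfolding g_def using v mu_pos
    by (auto intro!: derivative_eq_intros simp: field_simps power2_eq_square)
  moreover have "\<forall>u. \<bar>v - u\<bar> < v \<longrightarrow> g v \<le> g u"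
  proof (intro allI impI)
    fix u assume "\<bar>v - u\<bar> < v"
    then have "u > 0" by auto
    moreover have "prox_obj z v \<le> prox_obj z u" using p by (simp add: prox_q_iff)
    ultimately show "g v \<le> g u" using v by (simp add: prox_obj_def g_def)
  qed
  ultimately have "(v - z)/mu + lam * (q * v powr (q-1)) = 0"
    using DERIV_local_min v by blast
  then show ?thesis using mu_pos by (simp add: field_simps)
qed

lemma prox_q_above_tau_pos:
  assumes z: "z > tau" and p: "v \<in> prox_q lam mu q z"
  shows "v > 0"
proof -
  have min: "prox_obj z v \<le> prox_obj z u" for u using p by (simp add: prox_q_iff)
  have "prox_obj z eta - prox_obj z 0 = eta^2/(2*mu) + lam * eta powr q - z * eta / mu"
    using mu_pos eta_pos by (simp add: prox_obj_def field_simps power2_eq_square)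
  also have "\<dots> = eta * tau / mu - z * eta / mu"
    using penalty_eq_tau_line_at_eta by linarith
  also have "\<dots> = eta * (tau - z) / mu"
    by (simp add: right_diff_distrib diff_divide_distrib mult.commute)
  also have "\<dots> < 0" using z eta_pos mu_pos by (simp add: divide_neg_pos mult_pos_neg)
  finally have "v \<noteq> 0" using min[of eta] by auto
  moreover have "\<not> v < 0"
  proof
    assume "v < 0"
    then have "(z - (-v))^2 < (z - v)^2"
      using z tau_pos by (simp add: power2_eq_square algebra_simps mult_neg_pos)
    then have "prox_obj z (-v) < prox_obj z v"
      using mu_pos by (simp add: prox_obj_def divide_strict_right_mono)
    with min[of "-v"] show False by simp
  qed
  ultimately show "v > 0" by simp
qed

text \<open>Comparing with \<open>0\<close> and using stationarity gives \<open>a v\<^bsup>q-1\<^esup> \<le> v\<close>, i.e. \<open>v\<^bsup>2-q\<^esup> \<ge> a = \<eta>\<^bsup>2-q\<^esup>\<close>.\<close>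
lemma prox_q_above_tau_ge_eta:
  assumes z: "z > tau" and p: "v \<in> prox_q lam mu q z"
  shows "v \<ge> eta"
proof -
  have v: "v > 0" using prox_q_above_tau_pos[OF z p] .
  have min: "prox_obj z v \<le> prox_obj z 0" using p by (simp add: prox_q_iff)
  define r where "r = v powr (q-1)"
  have "r > 0" using v by (simp add: r_def)
  have z_eq: "z = v + lam * mu * q * r"
    using prox_q_stationary[OF v p] by (simp add: r_def)
  have "prox_obj z v - prox_obj z 0 = v^2/(2*mu) - z * v/mu + lam * (r * v)"
    using v mu_pos powr_eq_powr_minus_one_mult[OF v, of q]
    by (simp add: prox_obj_def r_def field_simps power2_eq_square)
  also have "\<dots> = v * (a * r - v) / (2*mu)"
    using mu_pos by (simp add: z_eq a_def field_simps power2_eq_square)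
  finally have "v * (a * r - v) / (2*mu) \<le> 0" using min by simp
  then have "a \<le> v / r"
    using v mu_pos \<open>r > 0\<close> by (simp add: divide_le_0_iff mult_le_0_iff field_simps)
  also have "v / r = v powr (2-q)"
    using powr_add[of v "2-q" "q-1"] v \<open>r > 0\<close> by (simp add: r_def field_simps)
  finally have "a powr (1/(2-q)) \<le> (v powr (2-q)) powr (1/(2-q))"
    using a_pos q_less_1 by (intro powr_mono2) auto
  then show ?thesis using v q_less_1 by (simp add: eta_eq powr_powr)
qed

text \<open>
  Two minimisers \<open>\<eta> \<le> v\<^sub>1 < v\<^sub>2\<close> would both satisfy the stationarity equation, but on
  \<open>[\<eta>, \<infinity>)\<close> the map \<open>v \<mapsto> v + \<lambda>\<mu>q v\<^bsup>q-1\<^esup>\<close> is strictly increasing: the slope of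
  \<open>v\<^bsup>q-1\<^esup>\<close> there is at least \<open>(q-1) \<eta>\<^bsup>q-2\<^esup> = -(1-q)/a\<close>, so the map grows at least at rate \<open>1 - q/2\<close>.
\<close>
lemma prox_q_above_tau_unique:
  assumes z: "z > tau" and p1: "v1 \<in> prox_q lam mu q z" and p2: "v2 \<in> prox_q lam mu q z"
  shows "v1 = v2"
proof (rule ccontr)
  assume "v1 \<noteq> v2"
  then obtain u w where pu: "u \<in> prox_q lam mu q z" and pw: "w \<in> prox_q lam mu q z"
    and "u < w"
    using p1 p2 by (metis linorder_neqE_linordered_idom)
  have "u \<ge> eta" using prox_q_above_tau_ge_eta[OF z pu] .
  then have u: "u > 0" and w: "w > 0" using eta_pos \<open>u < w\<close> by auto
  define D where "D = w - u"
  have "w powr (q-1) - u powr (q-1) \<ge> (q-1) * u powr (q-1-1) * D"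
    using powr_above_tangent[of "q-1" u w] q_less_1 u w by (simp add: D_def)
  then have "u powr (q-1) - w powr (q-1) \<le> (1-q) * u powr (q-2) * D"
    by (simp add: algebra_simps)
  also have "\<dots> \<le> (1-q) * (1/a) * D"
  proof -
    have "u powr (q-2) \<le> eta powr (q-2)"
      using \<open>u \<ge> eta\<close> eta_pos q_less_1 by (intro powr_mono2') auto
    then show ?thesis
      using q_less_1 \<open>u < w\<close> by (intro mult_right_mono mult_left_mono) (auto simp: D_def eta_powr_q_minus_2)
  qed
  finally have "u powr (q-1) - w powr (q-1) \<le> (1-q) * (1/a) * D" .
  moreover have "D = lam * mu * q * (u powr (q-1) - w powr (q-1))"
    using prox_q_stationary[OF u pu] prox_q_stationary[OF w pw] by (simp add: D_def algebra_simps)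
  ultimately have "D \<le> lam * mu * q * ((1-q) * (1/a) * D)"
    using lam_pos mu_pos q_pos by (metis mult_left_mono mult_nonneg_nonneg less_imp_le)
  also have "\<dots> = q / 2 * D" using lam_pos mu_pos q_less_1 by (simp add: a_def field_simps)
  finally have "D \<le> q / 2 * D" .
  moreover have "q / 2 * D < 1 * D"
    using q_less_1 \<open>u < w\<close> by (intro mult_strict_right_mono) (auto simp: D_def)
  ultimately show False by linarith
qed

lemma prox_q_above_tau:
  assumes z: "\<bar>z\<bar> > tau"
  shows "\<exists>!v. v \<in> prox_q lam mu q z" and "v \<in> prox_q lam mu q z \<Longrightarrow> \<bar>v\<bar> \<ge> eta"
proof -
  consider "z > tau" | "-z > tau" using z by linarith
  then show "\<exists>!v. v \<in> prox_q lam mu q z"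
  proof cases
    case 1
    then show ?thesis using prox_q_nonempty prox_q_above_tau_unique by blast
  next
    case 2
    then have "v1 = v2" if "v1 \<in> prox_q lam mu q z" "v2 \<in> prox_q lam mu q z" for v1 v2
      using prox_q_above_tau_unique[of "-z" "-v1" "-v2"] that prox_q_uminus by simp
    then show ?thesis using prox_q_nonempty by blast
  qed
  show "\<bar>v\<bar> \<ge> eta" if "v \<in> prox_q lam mu q z"
  proof (cases "z > 0")
    case True
    then show ?thesis using prox_q_above_tau_ge_eta[of z v] z that eta_pos by simp
  next
    case False
    then show ?thesis using prox_q_above_tau_ge_eta[of "-z" "-v"] z that prox_q_uminus by simp
  qed
qed

lemma Tq_in_prox_q: "Tq lam mu q z w \<in> prox_q lam mu q z"
proof -
  consider "\<bar>z\<bar> < tau" | "\<bar>z\<bar> = tau" | "\<bar>z\<bar> > tau" by linarith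
  then show ?thesis
  proof cases
    case 1
    then show ?thesis using prox_q_below_tau by (simp add: Tq_def)
  next
    case 2
    then show ?thesis using prox_q_at_tau by (simp add: Tq_def)
  next
    case 3
    then show ?thesis using theI'[OF prox_q_above_tau(1)] by (simp add: Tq_def)
  qed
qed

lemma Tq_eq_0_or_abs_ge_eta: "Tq lam mu q z w = 0 \<or> \<bar>Tq lam mu q z w\<bar> \<ge> eta"
proof -
  consider "\<bar>z\<bar> < tau" | "\<bar>z\<bar> = tau" | "\<bar>z\<bar> > tau" by linarith
  then show ?thesis
  proof cases
    case 1
    then show ?thesis using Tq_in_prox_q[of z w] prox_q_below_tau by simp
  next
    case 2
    then have "z \<noteq> 0" using tau_pos by auto
    then show ?thesis using 2 eta_pos by (simp add: Tq_def abs_mult)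
  next
    case 3
    then show ?thesis using Tq_in_prox_q prox_q_above_tau(2) by blast
  qed
qed

end

lemma sum_mult_update:
  fixes g :: "nat \<Rightarrow> real"
  assumes "i < N" "\<And>l. l < N \<Longrightarrow> v' l = v l + (if l = i then d else 0)"
  shows "(\<Sum>l<N. g l * v' l) = (\<Sum>l<N. g l * v l) + g i * d"
proof -
  have "(\<Sum>l<N. g l * v' l) = (\<Sum>l<N. g l * v l + (if l = i then g i * d else 0))"
    using assms by (intro sum.cong) (auto simp: algebra_simps)
  also have "\<dots> = (\<Sum>l<N. g l * v l) + g i * d"
    using assms(1) by (simp add: sum.distrib)
  finally show ?thesis .
qed

locale gaita = prox_setting lam mu q
  for lam mu q :: real +
  fixes m N :: nat and A :: "nat \<Rightarrow> nat \<Rightarrow> real" and y :: "nat \<Rightarrow> real"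
    and x :: "nat \<Rightarrow> nat \<Rightarrow> real"
  assumes N_pos: "N \<ge> 1" and mu_less: "mu < 1 / Lmax m N A"
    and gaita: "is_gaita m N A y lam q mu x"
begin

definition objective :: "(nat \<Rightarrow> real) \<Rightarrow> real" where
  "objective v = (\<Sum>k<m. ((\<Sum>l<N. A k l * v l) - y k)^2) / 2 + lam * (\<Sum>j<N. \<bar>v j\<bar> powr q)"

definition residual :: "nat \<Rightarrow> nat \<Rightarrow> real" where
  "residual n k = (\<Sum>l<N. A k l * x n l) - y k"

definition partial_grad :: "nat \<Rightarrow> nat \<Rightarrow> real" where
  "partial_grad n i = (\<Sum>k<m. A k i * residual n k)"

lemma x_Suc_updated:
  "x (Suc n) (n mod N) = Tq lam mu q (x n (n mod N) - mu * partial_grad n (n mod N)) (x n (n mod N))"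
  using gaita N_pos unfolding is_gaita_def partial_grad_def residual_def by simp

lemma x_Suc_other: "j < N \<Longrightarrow> j \<noteq> n mod N \<Longrightarrow> x (Suc n) j = x n j"
  using gaita unfolding is_gaita_def by simp

lemma objective_nonneg: "objective v \<ge> 0"
  unfolding objective_def using lam_pos
  by (intro add_nonneg_nonneg mult_nonneg_nonneg sum_nonneg divide_nonneg_pos) auto

lemma prox_step_decrease:
  assumes i: "i = n mod N"
  defines "d \<equiv> x (Suc n) i - x n i"
  shows "d^2/(2*mu) + d * partial_grad n i + lam * \<bar>x (Suc n) i\<bar> powr q \<le> lam * \<bar>x n i\<bar> powr q"
proof -
  define z where "z = x n i - mu * partial_grad n i"
  have "x (Suc n) i \<in> prox_q lam mu q z"
    using Tq_in_prox_q x_Suc_updated by (simp add: i z_def)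
  then have "prox_obj z (x (Suc n) i) \<le> prox_obj z (x n i)"
    by (simp add: prox_q_iff)
  moreover have "prox_obj z (x (Suc n) i) - prox_obj z (x n i)
                 = d^2/(2*mu) + d * partial_grad n i + lam * \<bar>x (Suc n) i\<bar> powr q - lam * \<bar>x n i\<bar> powr q"
    using mu_pos by (simp add: prox_obj_def z_def d_def field_simps power2_eq_square)
  ultimately show ?thesis by linarith
qed

lemma objective_Suc:
  assumes i: "i = n mod N"
  defines "d \<equiv> x (Suc n) i - x n i"
  shows "objective (x (Suc n)) = objective (x n) + d * partial_grad n i + d^2 * col_norm2 m A i / 2
           + lam * \<bar>x (Suc n) i\<bar> powr q - lam * \<bar>x n i\<bar> powr q"
proof -
  have "i < N" using N_pos by (simp add: i)
  have upd: "x (Suc n) l = x n l + (if l = i then d else 0)" if "l < N" for l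
    using x_Suc_other[OF that] by (auto simp: d_def i)
  have "residual (Suc n) k = residual n k + A k i * d" for k
    using sum_mult_update[OF \<open>i < N\<close> upd, of "A k"] by (simp add: residual_def)
  then have "(\<Sum>k<m. (residual (Suc n) k)^2)
             = (\<Sum>k<m. (residual n k)^2 + 2 * d * (A k i * residual n k) + d^2 * (A k i)^2)"
    by (simp add: power2_eq_square algebra_simps)
  also have "\<dots> = (\<Sum>k<m. (residual n k)^2) + 2 * d * partial_grad n i + d^2 * col_norm2 m A i"
    by (simp add: sum.distrib sum_distrib_left partial_grad_def col_norm2_def)
  finally have data: "(\<Sum>k<m. (residual (Suc n) k)^2)
                      = (\<Sum>k<m. (residual n k)^2) + 2 * d * partial_grad n i + d^2 * col_norm2 m A i" .
  have "(\<Sum>j<N. \<bar>x (Suc n) j\<bar> powr q) = (\<Sum>j<N. \<bar>x n j\<bar> powr q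
           + (if j = i then \<bar>x (Suc n) i\<bar> powr q - \<bar>x n i\<bar> powr q else 0))"
    by (intro sum.cong) (auto simp: upd)
  then have penalty: "(\<Sum>j<N. \<bar>x (Suc n) j\<bar> powr q)
                      = (\<Sum>j<N. \<bar>x n j\<bar> powr q) + (\<bar>x (Suc n) i\<bar> powr q - \<bar>x n i\<bar> powr q)"
    using \<open>i < N\<close> by (simp add: sum.distrib)
  have obj: "objective (x k) = (\<Sum>k'<m. (residual k k')^2)/2 + lam * (\<Sum>j<N. \<bar>x k j\<bar> powr q)" for k
    by (simp add: objective_def residual_def)
  show ?thesis
    unfolding obj data penalty by (simp add: algebra_simps add_divide_distrib)
qed

lemma Lmax_less_inverse_mu: "Lmax m N A < 1/mu"
proof (cases "Lmax m N A > 0")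
  case True
  then show ?thesis using mu_pos mu_less by (simp add: field_simps)
next
  case False
  then show ?thesis using mu_pos by (meson divide_pos_pos not_less order_le_less_trans zero_less_one)
qed

lemma objective_descent:
  "objective (x (Suc n)) + (1/mu - Lmax m N A)/2 * (x (Suc n) (n mod N) - x n (n mod N))^2
     \<le> objective (x n)"
proof -
  define i where "i = n mod N"
  define d where "d = x (Suc n) i - x n i"
  have "d^2 * col_norm2 m A i \<le> d^2 * Lmax m N A"
    unfolding Lmax_def using N_pos by (intro mult_left_mono Max_ge) (auto simp: i_def)
  moreover have "(1/mu - Lmax m N A)/2 * d^2 = d^2/(2*mu) - d^2 * Lmax m N A / 2"
    using mu_pos by (simp add: field_simps)
  ultimately show ?thesis
    using objective_Suc[OF i_def] prox_step_decrease[OF i_def]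
    unfolding i_def[symmetric] d_def[symmetric] by linarith
qed

text \<open>Coordinate \<open>j\<close> is updated at step \<open>j\<close>, and from then on only by \<open>Tq\<close>.\<close>
lemma coordinate_gap:
  assumes "j < N" "j < n"
  shows "x n j = 0 \<or> \<bar>x n j\<bar> \<ge> eta"
  using assms(2)
proof (induction n)
  case (Suc n)
  show ?case
  proof (cases "j = n mod N")
    case True
    then have "x (Suc n) j = Tq lam mu q (x n j - mu * partial_grad n j) (x n j)"
      using x_Suc_updated[of n] by simp
    then show ?thesis using Tq_eq_0_or_abs_ge_eta by simp
  next
    case False
    have "j < n"
    proof (cases "n < N")
      case True
      then show ?thesis using False Suc.prems by simp
    qed (use assms(1) in simp)
    then show ?thesis using Suc.IH x_Suc_other[OF assms(1) False] by simp
  qed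
qed simp

lemma step_eventually_less:
  assumes "e > 0"
  shows "\<exists>K. \<forall>n\<ge>K. \<forall>j<N. \<bar>x (Suc n) j - x n j\<bar> < e"
proof -
  define d where "d n = x (Suc n) (n mod N) - x n (n mod N)" for n
  have "(1/mu - Lmax m N A)/2 > 0" using Lmax_less_inverse_mu by simp
  then have "summable (\<lambda>n. (d n)^2)"
    by (rule summable_of_sufficient_decrease[where T="\<lambda>n. objective (x n)"])
       (use objective_descent objective_nonneg in \<open>simp_all add: d_def\<close>)
  then have "(\<lambda>n. (d n)^2) \<longlonglongrightarrow> 0" by (rule summable_LIMSEQ_zero)
  from order_tendstoD(2)[OF this, of "e^2"] assms
  obtain K where K: "\<And>n. n \<ge> K \<Longrightarrow> (d n)^2 < e^2"
    unfolding eventually_sequentially by auto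
  have "\<bar>x (Suc n) j - x n j\<bar> < e" if "n \<ge> K" "j < N" for n j
  proof (cases "j = n mod N")
    case True
    then show ?thesis
      using K[OF that(1)] assms power_less_imp_less_base[of "\<bar>d n\<bar>" 2 e] by (simp add: d_def)
  qed (use x_Suc_other that assms in simp)
  then show ?thesis by blast
qed

lemma sgn_eventually_constant:
  "\<exists>K\<ge>N. \<forall>n\<ge>K. \<forall>j<N. sgn (x n j) = sgn (x K j)"
proof -
  obtain K0 where K0: "\<And>n j. n \<ge> K0 \<Longrightarrow> j < N \<Longrightarrow> \<bar>x (Suc n) j - x n j\<bar> < eta"
    using step_eventually_less[OF eta_pos] by blast
  define K where "K = max K0 N"
  have "sgn (x n j) = sgn (x K j)" if "n \<ge> K" "j < N" for n j
    using that(1)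
  proof (induction n rule: dec_induct)
    case (step n)
    have "K0 \<le> n" "j < n" using step.hyps that(2) by (simp_all add: K_def)
    then have "sgn (x (Suc n) j) = sgn (x n j)"
      using that(2)
      by (intro sgn_eq_if_gap[OF eta_pos] coordinate_gap K0) simp_all
    then show ?case using step.IH by simp
  qed simp
  moreover have "K \<ge> N" by (simp add: K_def)
  ultimately show ?thesis by blast
qed

lemma sgn_eventually_eq_limit_point:
  assumes "is_limit_point N x xs"
  shows "\<exists>K\<ge>N. \<forall>n\<ge>K. \<forall>j<N. sgn (x n j) = sgn (xs j)"
proof -
  obtain K where "K \<ge> N" and K: "\<And>n j. n \<ge> K \<Longrightarrow> j < N \<Longrightarrow> sgn (x n j) = sgn (x K j)"
    using sgn_eventually_constant by blast
  obtain r where "strict_mono r" and r: "\<And>j. j < N \<Longrightarrow> (\<lambda>k. x (r k) j) \<longlonglongrightarrow> xs j"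
    using assms unfolding is_limit_point_def by blast
  have r_ge: "r k \<ge> k" for k using seq_suble[OF \<open>strict_mono r\<close>] .
  have lim: "sgn (xs j) = sgn (x K j)" if "j < N" for j
    using r[OF that] eta_pos
  proof (rule sgn_limit_eq_if_gap[where K="Suc K"])
    show "x (r k) j = 0 \<or> \<bar>x (r k) j\<bar> \<ge> eta" if "k \<ge> Suc K" for k
      using coordinate_gap[of j "r k"] r_ge[of k] that \<open>j < N\<close> \<open>K \<ge> N\<close> by simp
    show "sgn (x (r k) j) = sgn (x K j)" if "k \<ge> Suc K" for k
      using K[of "r k" j] r_ge[of k] that \<open>j < N\<close> by simp
  qed
  have "sgn (x n j) = sgn (xs j)" if "n \<ge> K" "j < N" for n j
    using K[OF that] lim[OF that(2)] by (rule trans_sym)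
  then show ?thesis using \<open>K \<ge> N\<close> by blast
qed

end

theorem theorem3:
  fixes m N :: nat and A :: "nat \<Rightarrow> nat \<Rightarrow> real" and y :: "nat \<Rightarrow> real"
    and lam q mu :: real and x :: "nat \<Rightarrow> nat \<Rightarrow> real" and xs :: "nat \<Rightarrow> real"
  assumes "N \<ge> 1"
    and "lam > 0" and "0 < q" and "q < 1"
    and "0 < mu" and "mu < 1 / Lmax m N A"
    and "is_gaita m N A y lam q mu x"
    and "is_limit_point N x xs"
  shows "\<exists>nstar::nat. nstar > N \<and> (\<forall>n>nstar.
           (\<forall>j<N. x n j = 0 \<or> \<bar>x n j\<bar> \<ge> eta_mq lam mu q)
         \<and> supp N (x n) = supp N xs
         \<and> (\<forall>j<N. sgn (x n j) = sgn (xs j)))"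
proof -
  interpret gaita lam mu q m N A y x
    using assms by unfold_locales auto
  obtain K where "K \<ge> N" and sgn_eq: "\<And>n j. n \<ge> K \<Longrightarrow> j < N \<Longrightarrow> sgn (x n j) = sgn (xs j)"
    using sgn_eventually_eq_limit_point[OF assms(8)] by blast
  have "(\<forall>j<N. x n j = 0 \<or> \<bar>x n j\<bar> \<ge> eta) \<and> supp N (x n) = supp N xs
        \<and> (\<forall>j<N. sgn (x n j) = sgn (xs j))" if "n > Suc K" for n
  proof (intro conjI allI impI)
    show "x n j = 0 \<or> \<bar>x n j\<bar> \<ge> eta" if "j < N" for j
      using coordinate_gap[OF that] \<open>n > Suc K\<close> \<open>K \<ge> N\<close> that by simp
    show sgn_n: "sgn (x n j) = sgn (xs j)" if "j < N" for j
      using sgn_eq[OF _ that] \<open>n > Suc K\<close> by simp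
    have "x n j = 0 \<longleftrightarrow> xs j = 0" if "j < N" for j
      using sgn_n[OF that] by (metis sgn_0_0)
    then show "supp N (x n) = supp N xs"
      unfolding supp_def by blast
  qed
  moreover have "Suc K > N" using \<open>K \<ge> N\<close> by simp
  ultimately show ?thesis by blast
qed

end
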